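(* Let $m\ge n$ and let $C_1,\dots,C_m\subseteq\mathbb{S}$ be nonempty s-convex sets. If $\bigcap_{j\in J}C_j\neq\emptyset$ for every $J\subseteq\{1,\dots,m\}$ with $\operatorname{card}J=n$, and $\bigcup_{j\in J}C_j\neq\mathbb{S}$ for every $J\subseteq\{1,\dots,m\}$ with $\operatorname{card}J=n+1$, then $\bigcap_{i=1}^mC_i\neq\emptyset$.
   Context: Standing setting: $n\ge 2$; $o$ denotes the zero vector of $\mathbb{R}^n$. $\Phi:\mathbb{R}^n\to\mathbb{R}_+:=[0,\infty)$ is a continuous function with $\Phi(tx)=t\Phi(x)$ for all $x\in\mathbb{R}^n$, $t\ge 0$, and $\Phi(x)=0$ iff $x=o$. Set $\mathbb{S}:=\{x\in\mathbb{R}^n\mid \Phi(x)=1\}$ and $\rho:\mathbb{R}^n\to\{o\}\cup\mathbb{S}$, $\rho(x):=x/\Phi(x)$ for $x\neq o$, $\rho(o):=o$. For $x,y\in\mathbb{S}$, $\lambda\in[0,1]$, $\lambda x+_s(1-\lambda)y:=\rho(\lambda x+(1-\lambda)y)$. A nonempty set $S\subseteq\mathbb{S}$ is called s-convex if $\lambda x+_s(1-\lambda)y\in S$ for all $x,y\in S$ and $\lambda\in[0,1]$. *)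

theory Defs
  imports "HOL-Analysis.Analysis"
begin

definition gauge :: "('a::real_normed_vector \<Rightarrow> real) \<Rightarrow> bool" where
  "gauge Phi \<longleftrightarrow> continuous_on UNIV Phi \<and> (\<forall>x. Phi x \<ge> 0)
     \<and> (\<forall>x t. t \<ge> 0 \<longrightarrow> Phi (t *\<^sub>R x) = t * Phi x)
     \<and> (\<forall>x. Phi x = 0 \<longleftrightarrow> x = 0)"

definition gsphere :: "('a::real_normed_vector \<Rightarrow> real) \<Rightarrow> 'a set" where
  "gsphere Phi = {x. Phi x = 1}"

definition rho :: "('a::real_normed_vector \<Rightarrow> real) \<Rightarrow> 'a \<Rightarrow> 'a" where
  "rho Phi x = (if x = 0 then 0 else (1 / Phi x) *\<^sub>R x)"

definition scomb :: "('a::real_normed_vector \<Rightarrow> real) \<Rightarrow> real \<Rightarrow> 'a \<Rightarrow> 'a \<Rightarrow> 'a" where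
  "scomb Phi l x y = rho Phi (l *\<^sub>R x + (1 - l) *\<^sub>R y)"

definition s_convex :: "('a::real_normed_vector \<Rightarrow> real) \<Rightarrow> 'a set \<Rightarrow> bool" where
  "s_convex Phi S \<longleftrightarrow> S \<noteq> {} \<and> S \<subseteq> gsphere Phi \<and>
     (\<forall>x\<in>S. \<forall>y\<in>S. \<forall>l. 0 \<le> l \<and> l \<le> 1 \<longrightarrow> scomb Phi l x y \<in> S)"

end

theory Submission
  imports Defs
begin

text \<open>The radial cone over an s-convex set C is a convex cone without apex, and the C_j have a
  common point iff their radial cones have. So it suffices to check the hypothesis of Helly's
  theorem for the cones, i.e. that any n + 1 of them meet. Suppose n + 1 blunt convex cones
  K_1, ..., K_(n+1), any n of which meet, had empty intersection, and pick x_i in all cones but K_i.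
  In every nontrivial linear relation among the x_i all coefficients have the same strict sign
  (otherwise moving the negative part to the other side produces a common point of the cones, or
  0 in a cone). Hence the x_i span R^n and satisfy a positive relation; subtracting a suitable
  multiple of it writes any p \<noteq> 0 as a nonnegative combination of the x_i with some vanishing
  coefficient, the k-th say, so that p \<in> K_k. Thus the cones would cover R^n - {0}, contradicting
  the assumption that no n + 1 of the C_j cover the sphere.\<close>

lemma exists_nontrivial_linear_relation:
  fixes x :: "'i \<Rightarrow> 'a::euclidean_space"
  assumes "finite J" "card J > DIM('a)"
  shows "\<exists>c. (\<exists>i\<in>J. c i \<noteq> 0) \<and> (\<Sum>i\<in>J. c i *\<^sub>R x i) = 0"
proof (cases "inj_on x J")
  case False
  then obtain i j where ij: "i \<in> J" "j \<in> J" "i \<noteq> j" "x i = x j" by (auto simp: inj_on_def)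
  define c where "c = (\<lambda>l. if l = i then 1 else if l = j then -1 else (0::real))"
  have "(\<Sum>l\<in>J. c l *\<^sub>R x l) = (\<Sum>l\<in>{i,j}. c l *\<^sub>R x l)"
    by (rule sum.mono_neutral_right) (use ij assms(1) in \<open>auto simp: c_def\<close>)
  also have "\<dots> = 0" using ij by (simp add: c_def)
  finally show ?thesis using ij by (intro exI[of _ c]) (auto simp: c_def)
next
  case True
  then have "card (x ` J) > DIM('a)" using assms(2) by (simp add: card_image)
  then have "dependent (x ` J)" using independent_bound[of "x ` J"] by linarith
  then obtain u where u: "\<exists>v\<in>x ` J. u v \<noteq> 0" "(\<Sum>v\<in>x ` J. u v *\<^sub>R v) = 0"
    unfolding real_vector.dependent_finite[OF finite_imageI[OF assms(1)]] by blast
  have "(\<Sum>i\<in>J. u (x i) *\<^sub>R x i) = 0" using u(2) True by (simp add: sum.reindex)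
  then show ?thesis using u(1) by (intro exI[of _ "u \<circ> x"]) auto
qed

lemma linear_combination_avoiding_index:
  fixes x :: "'i \<Rightarrow> 'a::euclidean_space"
  assumes fin: "finite J" and card: "card J > DIM('a)" and k: "k \<in> J"
    and trivial: "\<And>c. (\<Sum>i\<in>J. c i *\<^sub>R x i) = 0 \<Longrightarrow> c k = 0 \<Longrightarrow> \<forall>i\<in>J. c i = 0"
  shows "\<exists>d. d k = 0 \<and> (\<Sum>i\<in>J. d i *\<^sub>R x i) = p"
proof -
  define y where "y = x(k := p)"
  obtain c where c: "\<exists>i\<in>J. c i \<noteq> 0" "(\<Sum>i\<in>J. c i *\<^sub>R y i) = 0"
    using exists_nontrivial_linear_relation[OF fin card] by blast
  have split: "(\<Sum>i\<in>J. c i *\<^sub>R y i) = c k *\<^sub>R p + (\<Sum>i\<in>J-{k}. c i *\<^sub>R x i)"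
    by (simp add: sum.remove[OF fin k] y_def)
  have ck: "c k \<noteq> 0"
  proof
    assume ck: "c k = 0"
    have "(\<Sum>i\<in>J. c i *\<^sub>R x i) = (\<Sum>i\<in>J. c i *\<^sub>R y i)" by (rule sum.cong) (auto simp: y_def ck)
    then show False using trivial[of c] c ck by auto
  qed
  define d where "d i = (if i = k then 0 else - c i / c k)" for i
  have "(\<Sum>i\<in>J. d i *\<^sub>R x i) = (\<Sum>i\<in>J-{k}. (- 1 / c k) *\<^sub>R (c i *\<^sub>R x i))"
    by (simp add: sum.remove[OF fin k] d_def)
  also have "\<dots> = (- 1 / c k) *\<^sub>R (\<Sum>i\<in>J-{k}. c i *\<^sub>R x i)"
    by (simp add: scaleR_sum_right)
  also have "\<dots> = (- 1 / c k) *\<^sub>R (- (c k *\<^sub>R p))"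
    using split c(2) by (metis add.commute add_eq_0_iff)
  also have "\<dots> = p" using ck by simp
  finally have "(\<Sum>i\<in>J. d i *\<^sub>R x i) = p" .
  moreover have "d k = 0" by (simp add: d_def)
  ultimately show ?thesis by blast
qed

text \<open>Subtract the largest multiple of the positive relation that keeps all coefficients nonnegative.\<close>

lemma nonneg_combination_with_zero_coeff:
  fixes x :: "'i \<Rightarrow> 'a::real_vector"
  assumes fin: "finite J" and ne: "J \<noteq> {}" and a: "\<forall>i\<in>J. a i > 0" "(\<Sum>i\<in>J. a i *\<^sub>R x i) = 0"
  shows "\<exists>e k. k \<in> J \<and> e k = 0 \<and> (\<forall>i\<in>J. e i \<ge> 0) \<and> (\<Sum>i\<in>J. e i *\<^sub>R x i) = (\<Sum>i\<in>J. d i *\<^sub>R x i)"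
proof -
  define s where "s = Min ((\<lambda>i. d i / a i) ` J)"
  have "s \<in> (\<lambda>i. d i / a i) ` J" unfolding s_def by (rule Min_in) (use fin ne in auto)
  then obtain k where k: "k \<in> J" "d k / a k = s" by auto
  have "s \<le> d i / a i" if "i \<in> J" for i
    unfolding s_def using fin that by simp
  then have "\<forall>i\<in>J. d i - s * a i \<ge> 0" using a(1) by (auto simp: pos_le_divide_eq)
  moreover have "d k - s * a k = 0" using k a(1) by (auto simp: field_simps)
  moreover have "(\<Sum>i\<in>J. (d i - s * a i) *\<^sub>R x i) = (\<Sum>i\<in>J. d i *\<^sub>R x i) - s *\<^sub>R (\<Sum>i\<in>J. a i *\<^sub>R x i)"
    by (simp add: scaleR_diff_left sum_subtractf scaleR_sum_right)
  ultimately show ?thesis using k(1) a(2) by (intro exI[of _ "\<lambda>i. d i - s * a i"] exI[of _ k]) simp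
qed

definition blunt_convex_cone :: "'a::real_vector set \<Rightarrow> bool" where
  "blunt_convex_cone K \<longleftrightarrow> 0 \<notin> K \<and> (\<forall>a\<in>K. \<forall>b\<in>K. a + b \<in> K) \<and> (\<forall>a\<in>K. \<forall>t>0. t *\<^sub>R a \<in> K)"

lemma blunt_convex_coneD:
  assumes "blunt_convex_cone K"
  shows "0 \<notin> K" "a \<in> K \<Longrightarrow> b \<in> K \<Longrightarrow> a + b \<in> K" "a \<in> K \<Longrightarrow> t > 0 \<Longrightarrow> t *\<^sub>R a \<in> K"
  using assms by (auto simp: blunt_convex_cone_def)

lemma convex_blunt_convex_cone:
  assumes "blunt_convex_cone K"
  shows "convex K"
  unfolding convex_def
proof (intro ballI allI impI)
  fix a b and u v :: real
  assume ab: "a \<in> K" "b \<in> K" and uv: "0 \<le> u" "0 \<le> v" "u + v = 1"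
  show "u *\<^sub>R a + v *\<^sub>R b \<in> K"
  proof (cases "u = 0 \<or> v = 0")
    case True
    then show ?thesis using uv ab by auto
  next
    case False
    then show ?thesis using uv ab blunt_convex_coneD[OF assms] by simp
  qed
qed

lemma blunt_convex_cone_sum:
  fixes y :: "'i \<Rightarrow> 'a::real_vector"
  assumes K: "blunt_convex_cone K" and "finite I" "\<forall>i\<in>I. c i \<ge> 0"
    and "\<forall>i\<in>I. c i > 0 \<longrightarrow> y i \<in> K" "\<exists>i\<in>I. c i > 0"
  shows "(\<Sum>i\<in>I. c i *\<^sub>R y i) \<in> K"
  using assms(2-)
proof (induction I rule: finite_induct)
  case empty
  then show ?case by simp
next
  case (insert a I)
  have head: "c a *\<^sub>R y a \<in> K" if "c a > 0"
    using that insert.prems blunt_convex_coneD(3)[OF K] by simp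
  show ?case
  proof (cases "\<exists>i\<in>I. c i > 0")
    case True
    then have "(\<Sum>i\<in>I. c i *\<^sub>R y i) \<in> K" using insert by auto
    moreover have "c a = 0" if "\<not> c a > 0" using that insert.prems by force
    ultimately show ?thesis using head insert(1,2) blunt_convex_coneD(2)[OF K] by (cases "c a > 0") auto
  next
    case False
    then have "(\<Sum>i\<in>I. c i *\<^sub>R y i) = 0" using insert.prems by (intro sum.neutral) force
    moreover have "c a > 0" using False insert.prems by auto
    ultimately show ?thesis using head insert(1,2) by simp
  qed
qed

context
  fixes K :: "'j \<Rightarrow> 'a::euclidean_space set" and J :: "'j set" and x :: "'j \<Rightarrow> 'a"
  assumes cones: "\<And>j. j \<in> J \<Longrightarrow> blunt_convex_cone (K j)"
    and fin: "finite J"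
    and x_mem: "\<And>i j. i \<in> J \<Longrightarrow> j \<in> J \<Longrightarrow> i \<noteq> j \<Longrightarrow> x i \<in> K j"
    and no_common: "\<nexists>z. \<forall>j\<in>J. z \<in> K j"
begin

lemma combination_mem_cone:
  assumes k: "k \<in> J" and c: "\<forall>i\<in>J. c i \<ge> 0" "c k = 0" "\<exists>i\<in>J. c i > 0"
  shows "(\<Sum>i\<in>J. c i *\<^sub>R x i) \<in> K k"
proof (rule blunt_convex_cone_sum[OF cones[OF k] fin c(1) _ c(3)])
  show "\<forall>i\<in>J. c i > 0 \<longrightarrow> x i \<in> K k" using k c(2) x_mem by (metis less_irrefl)
qed

lemma relation_pos_if_some_pos:
  assumes rel: "(\<Sum>i\<in>J. c i *\<^sub>R x i) = 0" and i: "i \<in> J" "c i > 0"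
  shows "\<forall>j\<in>J. c j > 0"
proof -
  have nonneg: "c j \<ge> 0" if j: "j \<in> J" for j
  proof (rule ccontr)
    assume "\<not> c j \<ge> 0"
    define z where "z = (\<Sum>i\<in>J. max (c i) 0 *\<^sub>R x i)"
    have "(\<Sum>i\<in>J. c i *\<^sub>R x i) = (\<Sum>i\<in>J. (max (c i) 0 - max (- c i) 0) *\<^sub>R x i)"
      by (rule sum.cong) auto
    then have z_neg: "z = (\<Sum>i\<in>J. max (- c i) 0 *\<^sub>R x i)"
      using rel by (simp add: z_def scaleR_diff_left sum_subtractf)
    have "z \<in> K k" if "k \<in> J" for k
    proof (cases "c k \<le> 0")
      case True
      show ?thesis unfolding z_def
        by (rule combination_mem_cone) (use that True i in \<open>auto intro!: bexI[of _ i]\<close>)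
    next
      case False
      show ?thesis unfolding z_neg
        by (rule combination_mem_cone) (use that False j \<open>\<not> c j \<ge> 0\<close> in \<open>auto intro!: bexI[of _ j]\<close>)
    qed
    then show False using no_common by blast
  qed
  show ?thesis
  proof (rule ccontr)
    assume "\<not> ?thesis"
    then obtain k where k: "k \<in> J" "c k = 0" using nonneg by force
    have "(\<Sum>i\<in>J. c i *\<^sub>R x i) \<in> K k"
      using k nonneg i by (intro combination_mem_cone[of k c]) auto
    then show False using rel blunt_convex_coneD(1)[OF cones[OF k(1)]] by simp
  qed
qed

lemma relation_strict_sign:
  assumes rel: "(\<Sum>i\<in>J. c i *\<^sub>R x i) = 0" and i: "i \<in> J" "c i \<noteq> 0"
  shows "(\<forall>j\<in>J. c j > 0) \<or> (\<forall>j\<in>J. c j < 0)"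
proof (cases "c i > 0")
  case True
  then show ?thesis using relation_pos_if_some_pos[OF rel i(1)] by blast
next
  case False
  have "(\<Sum>i\<in>J. (- c i) *\<^sub>R x i) = 0" using rel by (simp add: sum_negf)
  moreover have "- c i > 0" using False i(2) by linarith
  ultimately have "\<forall>j\<in>J. - c j > 0" by (rule relation_pos_if_some_pos[OF _ i(1)])
  then show ?thesis by simp
qed

lemma relation_trivial_if_zero_coeff:
  assumes rel: "(\<Sum>i\<in>J. c i *\<^sub>R x i) = 0" and k: "k \<in> J" "c k = 0"
  shows "\<forall>i\<in>J. c i = 0"
  using relation_strict_sign[OF rel] k by force

lemma exists_positive_relation:
  assumes "card J > DIM('a)"
  shows "\<exists>a. (\<forall>i\<in>J. a i > 0) \<and> (\<Sum>i\<in>J. a i *\<^sub>R x i) = 0"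
proof -
  obtain c i where c: "i \<in> J" "c i \<noteq> 0" "(\<Sum>i\<in>J. c i *\<^sub>R x i) = 0"
    using exists_nontrivial_linear_relation[OF fin assms] by blast
  have "(\<Sum>i\<in>J. (- c i) *\<^sub>R x i) = 0" using c(3) by (simp add: sum_negf)
  then show ?thesis
    using relation_strict_sign[OF c(3,1,2)] c(3) by (metis neg_0_less_iff_less)
qed

lemma blunt_convex_cones_cover:
  assumes card: "card J > DIM('a)" and p: "p \<noteq> 0"
  shows "\<exists>j\<in>J. p \<in> K j"
proof -
  obtain a where a: "\<forall>i\<in>J. a i > 0" "(\<Sum>i\<in>J. a i *\<^sub>R x i) = 0"
    using exists_positive_relation[OF card] by blast
  have ne: "J \<noteq> {}" using card by auto
  then obtain k where k: "k \<in> J" by blast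
  have "\<exists>d. d k = 0 \<and> (\<Sum>i\<in>J. d i *\<^sub>R x i) = p"
    using relation_trivial_if_zero_coeff[OF _ k] by (rule linear_combination_avoiding_index[OF fin card k])
  then obtain d where "(\<Sum>i\<in>J. d i *\<^sub>R x i) = p" by blast
  then obtain e j where e: "j \<in> J" "e j = 0" "\<forall>i\<in>J. e i \<ge> 0" "(\<Sum>i\<in>J. e i *\<^sub>R x i) = p"
    using nonneg_combination_with_zero_coeff[OF fin ne a, of d] by auto
  have "\<exists>i\<in>J. e i > 0"
  proof (rule ccontr)
    assume "\<not> ?thesis"
    then have "\<forall>i\<in>J. e i = 0" using e(3) by force
    then show False using e(4) p by simp
  qed
  then show ?thesis using combination_mem_cone[OF e(1,3,2)] e(1,4) by auto
qed

end

lemma blunt_convex_cones_common_point: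
  fixes K :: "'j \<Rightarrow> 'a::euclidean_space set"
  assumes "\<And>j. j \<in> J \<Longrightarrow> blunt_convex_cone (K j)" "finite J"
    and "\<And>i j. i \<in> J \<Longrightarrow> j \<in> J \<Longrightarrow> i \<noteq> j \<Longrightarrow> x i \<in> K j"
    and "card J > DIM('a)" "p \<noteq> 0" "\<forall>j\<in>J. p \<notin> K j"
  shows "\<exists>z. \<forall>j\<in>J. z \<in> K j"
  using blunt_convex_cones_cover[of J K x p] assms by blast

lemma Helly_indexed:
  fixes K :: "'i \<Rightarrow> 'a::euclidean_space set"
  assumes fin: "finite I" and convex: "\<And>i. i \<in> I \<Longrightarrow> convex (K i)"
    and small: "\<And>J. J \<subseteq> I \<Longrightarrow> card J \<le> DIM('a) + 1 \<Longrightarrow> (\<Inter>j\<in>J. K j) \<noteq> {}"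
  shows "(\<Inter>i\<in>I. K i) \<noteq> {}"
proof -
  have small_subfamily: "\<Inter>T \<noteq> {}" if "T \<subseteq> K ` I" "card T \<le> DIM('a) + 1" for T
  proof -
    obtain J where J: "J \<subseteq> I" "inj_on K J" "T = K ` J"
      using \<open>T \<subseteq> K ` I\<close> unfolding subset_image_inj by blast
    then show ?thesis using small[of J] that(2) by (simp add: card_image)
  qed
  show ?thesis
  proof (cases "card (K ` I) \<le> DIM('a) + 1")
    case True
    then show ?thesis using small_subfamily[of "K ` I"] by simp
  next
    case False
    then show ?thesis using Helly[of "K ` I"] convex small_subfamily by auto
  qed
qed

lemma INT_nonempty_if_subfamilies_card_eq:
  assumes "finite I" "n \<le> card I" "\<And>J. J \<subseteq> I \<Longrightarrow> card J = n \<Longrightarrow> (\<Inter>j\<in>J. A j) \<noteq> {}"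
    and J: "J \<subseteq> I" "card J \<le> n"
  shows "(\<Inter>j\<in>J. A j) \<noteq> {}"
proof -
  have fJ: "finite J" using J assms(1) finite_subset by blast
  have "n - card J \<le> card (I - J)" using assms J fJ by (simp add: card_Diff_subset)
  then obtain T where T: "T \<subseteq> I - J" "card T = n - card J" "finite T"
    by (rule obtain_subset_with_card_n)
  have "card (J \<union> T) = n" using T J fJ by (subst card_Un_disjoint) auto
  then have "(\<Inter>j\<in>J \<union> T. A j) \<noteq> {}" using assms(3) T J by blast
  then show ?thesis by blast
qed

lemma gauge_scaleR:
  assumes "gauge Phi" "t \<ge> 0"
  shows "Phi (t *\<^sub>R x) = t * Phi x"
  using assms by (simp add: gauge_def)

lemma gauge_eq_0_iff:
  assumes "gauge Phi"
  shows "Phi x = 0 \<longleftrightarrow> x = 0"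
  using assms by (simp add: gauge_def)

lemma rho_scaleR_pos:
  assumes "gauge Phi" "t > 0"
  shows "rho Phi (t *\<^sub>R y) = rho Phi y"
  using assms by (auto simp: rho_def gauge_scaleR)

lemma rho_gsphere:
  assumes "gauge Phi" "x \<in> gsphere Phi"
  shows "x \<noteq> 0" "rho Phi x = x"
  using assms gauge_eq_0_iff[OF assms(1), of x] by (auto simp: gsphere_def rho_def)

lemma gauge_rho_decomp:
  assumes "gauge Phi" "y \<noteq> 0"
  shows "Phi y > 0" "y = Phi y *\<^sub>R rho Phi y"
  using assms gauge_eq_0_iff[OF assms(1), of y] by (auto simp: gauge_def rho_def order_less_le)

definition radial_cone :: "('a::real_normed_vector \<Rightarrow> real) \<Rightarrow> 'a set \<Rightarrow> 'a set" where
  "radial_cone Phi C = {y. y \<noteq> 0 \<and> rho Phi y \<in> C}"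

lemma radial_cone_Int_gsphere:
  assumes "gauge Phi"
  shows "radial_cone Phi C \<inter> gsphere Phi = C \<inter> gsphere Phi"
  using rho_gsphere[OF assms] by (auto simp: radial_cone_def)

text \<open>A positive combination of two points of the cone is a positive multiple of an
  s-convex combination of their projections.\<close>

lemma radial_cone_add:
  assumes g: "gauge Phi" and C: "s_convex Phi C"
    and y1: "y1 \<in> radial_cone Phi C" and y2: "y2 \<in> radial_cone Phi C"
  shows "y1 + y2 \<in> radial_cone Phi C"
proof -
  define f1 f2 where "f1 = Phi y1" and "f2 = Phi y2"
  have f: "f1 > 0" "f2 > 0" and e: "y1 = f1 *\<^sub>R rho Phi y1" "y2 = f2 *\<^sub>R rho Phi y2"
    using gauge_rho_decomp[OF g] y1 y2 by (auto simp: f1_def f2_def radial_cone_def)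
  define mu where "mu = f1 / (f1 + f2)"
  define w where "w = mu *\<^sub>R rho Phi y1 + (1 - mu) *\<^sub>R rho Phi y2"
  have "scomb Phi mu (rho Phi y1) (rho Phi y2) \<in> C"
    using C f y1 y2 unfolding s_convex_def radial_cone_def mu_def by auto
  then have rho_w: "rho Phi w \<in> C" by (simp add: scomb_def w_def)
  then have "w \<noteq> 0" using C gauge_eq_0_iff[OF g, of 0] by (auto simp: s_convex_def gsphere_def rho_def)
  have "(f1 + f2) * mu = f1" "(f1 + f2) * (1 - mu) = f2" using f by (auto simp: mu_def field_simps)
  then have "y1 + y2 = (f1 + f2) *\<^sub>R w"
    by (subst e(1), subst e(2)) (simp add: w_def scaleR_add_right)
  then show ?thesis
    using \<open>w \<noteq> 0\<close> f rho_w rho_scaleR_pos[OF g, of "f1 + f2" w] by (simp add: radial_cone_def)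
qed

lemma blunt_convex_cone_radial_cone:
  assumes "gauge Phi" "s_convex Phi C"
  shows "blunt_convex_cone (radial_cone Phi C)"
  using radial_cone_add[OF assms] rho_scaleR_pos[OF assms(1)]
  by (auto simp: blunt_convex_cone_def radial_cone_def)

lemma radial_cones_common_point:
  fixes Phi :: "'a::euclidean_space \<Rightarrow> real" and C :: "'j \<Rightarrow> 'a set"
  assumes g: "gauge Phi" and fin: "finite J" and card: "card J > DIM('a)"
    and C: "\<And>j. j \<in> J \<Longrightarrow> s_convex Phi (C j)"
    and meet: "\<And>i. i \<in> J \<Longrightarrow> (\<Inter>j\<in>J - {i}. C j) \<noteq> {}"
    and not_cover: "(\<Union>j\<in>J. C j) \<noteq> gsphere Phi"
  shows "\<exists>z. \<forall>j\<in>J. z \<in> radial_cone Phi (C j)"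
proof -
  have C_sphere: "C j \<subseteq> gsphere Phi" if "j \<in> J" for j using C[OF that] by (simp add: s_convex_def)
  then have "(\<Union>j\<in>J. C j) \<subseteq> gsphere Phi" by blast
  with not_cover obtain p where p: "p \<in> gsphere Phi" "\<forall>j\<in>J. p \<notin> C j" by blast
  have "\<exists>v. \<forall>j\<in>J - {i}. v \<in> C j" if "i \<in> J" for i
    using meet[OF that] by (simp add: ex_in_conv[symmetric])
  then obtain x where x: "\<forall>i\<in>J. \<forall>j\<in>J - {i}. x i \<in> C j" by metis
  show ?thesis
  proof (rule blunt_convex_cones_common_point[where x = x and p = p, OF _ fin _ card])
    show "\<And>j. j \<in> J \<Longrightarrow> blunt_convex_cone (radial_cone Phi (C j))"
      by (rule blunt_convex_cone_radial_cone[OF g C])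
    show "p \<noteq> 0" using rho_gsphere[OF g p(1)] by simp
    show "\<forall>j\<in>J. p \<notin> radial_cone Phi (C j)"
      using p radial_cone_Int_gsphere[OF g] by blast
    show "\<And>i j. i \<in> J \<Longrightarrow> j \<in> J \<Longrightarrow> i \<noteq> j \<Longrightarrow> x i \<in> radial_cone Phi (C j)"
      using x C_sphere radial_cone_Int_gsphere[OF g] by blast
  qed
qed

lemma radial_cones_INT_nonempty_card_le:
  fixes Phi :: "'a::euclidean_space \<Rightarrow> real" and C :: "'j \<Rightarrow> 'a set"
  assumes g: "gauge Phi" and "finite I" "DIM('a) \<le> card I"
    and C: "\<And>i. i \<in> I \<Longrightarrow> s_convex Phi (C i)"
    and meet: "\<And>J. J \<subseteq> I \<Longrightarrow> card J = DIM('a) \<Longrightarrow> (\<Inter>j\<in>J. C j) \<noteq> {}"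
    and not_cover: "\<And>J. J \<subseteq> I \<Longrightarrow> card J = DIM('a) + 1 \<Longrightarrow> (\<Union>j\<in>J. C j) \<noteq> gsphere Phi"
    and J: "J \<subseteq> I" "card J \<le> DIM('a) + 1"
  shows "(\<Inter>j\<in>J. radial_cone Phi (C j)) \<noteq> {}"
proof (cases "card J \<le> DIM('a)")
  case True
  have "(\<Inter>j\<in>J. C j) \<noteq> {}"
    by (rule INT_nonempty_if_subfamilies_card_eq[OF assms(2,3) meet J(1) True])
  moreover have "C j \<subseteq> radial_cone Phi (C j)" if "j \<in> J" for j
  proof -
    have "C j \<subseteq> gsphere Phi" using C[of j] J(1) that by (auto simp: s_convex_def)
    then show ?thesis using radial_cone_Int_gsphere[OF g, of "C j"] by blast
  qed
  ultimately show ?thesis by blast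
next
  case False
  then have card: "card J = DIM('a) + 1" using J(2) by simp
  have fin: "finite J" using J(1) assms(2) finite_subset by blast
  have "\<exists>z. \<forall>j\<in>J. z \<in> radial_cone Phi (C j)"
  proof (rule radial_cones_common_point[OF g fin])
    show "(\<Inter>j\<in>J - {i}. C j) \<noteq> {}" if "i \<in> J" for i
      using meet[of "J - {i}"] J(1) card fin that by auto
  qed (use card J(1) C not_cover[OF J(1) card] in auto)
  then show ?thesis by blast
qed

theorem mainTheorem14:
  fixes Phi :: "real ^ 'n \<Rightarrow> real"
    and C :: "nat \<Rightarrow> (real ^ 'n) set"
    and m :: nat
  assumes "CARD('n) \<ge> 2"
    and "gauge Phi"
    and "m \<ge> CARD('n)"
    and "\<And>i. i \<in> {1..m} \<Longrightarrow> s_convex Phi (C i)"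
    and "\<And>J. J \<subseteq> {1..m} \<Longrightarrow> card J = CARD('n) \<Longrightarrow> (\<Inter>j\<in>J. C j) \<noteq> {}"
    and "\<And>J. J \<subseteq> {1..m} \<Longrightarrow> card J = CARD('n) + 1 \<Longrightarrow> (\<Union>j\<in>J. C j) \<noteq> gsphere Phi"
  shows "(\<Inter>i\<in>{1..m}. C i) \<noteq> {}"
proof -
  have "(\<Inter>i\<in>{1..m}. radial_cone Phi (C i)) \<noteq> {}"
  proof (rule Helly_indexed)
    show "convex (radial_cone Phi (C i))" if "i \<in> {1..m}" for i
      using convex_blunt_convex_cone blunt_convex_cone_radial_cone assms(2,4) that by blast
    show "(\<Inter>j\<in>J. radial_cone Phi (C j)) \<noteq> {}"
      if "J \<subseteq> {1..m}" "card J \<le> DIM(real ^ 'n) + 1" for J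
      using that assms(3-6) by (intro radial_cones_INT_nonempty_card_le[OF assms(2)]) simp_all
  qed simp
  then obtain z where "\<forall>i\<in>{1..m}. z \<in> radial_cone Phi (C i)" by blast
  then show ?thesis by (auto simp: radial_cone_def)
qed

end
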